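(* The total domination polynomials of the following graphs are unimodal: the helm graph $H_n$ ($n\ge 3$); the generalized helm graph $H_{n,m}$ ($n\ge 3$, $m\ge 1$); the graph $H(3)$ for every graph $H$; and every sunlike graph $G(v_1^{k_1},\dots,v_n^{k_n})$ with $k_1,\dots,k_n\ge 1$.
   Context: The wheel $W_n$ ($n\ge3$) is the cycle $C_n$ together with one extra vertex (hub) adjacent to all cycle vertices. The helm $H_n$ is obtained from $W_n$ by attaching one pendant edge at each vertex of the $n$-cycle; the generalized helm $H_{n,m}$ is obtained from $W_n$ by attaching $m$ pendant edges at each vertex of the $n$-cycle. For a graph $H$, $H(3)$ is obtained by identifying each vertex of $H$ with an end vertex of its own copy of the path $P_3$. For a graph $G$ with vertices $v_1,\dots,v_n$ and positive integers $k_i$, the sunlike graph $G(v_1^{k_1},\dots,v_n^{k_n})$ is obtained by attaching $k_i$ new pendant vertices to $v_i$ for each $i$. For a finite simple graph $G=(V,E)$, a set $D\subseteq V$ is a total dominating set if every vertex of $V$ is adjacent to some vertex of $D$; $d_t(G,i)$ is the number of total dominating sets of size $i$, and $D_t(G,x)=\sum_{i} d_t(G,i)x^i$. A polynomial $\sum a_ix^i$ is unimodal if $a_0\le\dots\le a_k\ge a_{k+1}\ge\dots\ge a_N$ for some $k$. *)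

theory Defs
  imports "HOL-Computational_Algebra.Polynomial"
begin

definition simple_graph :: "'a set \<Rightarrow> ('a \<Rightarrow> 'a \<Rightarrow> bool) \<Rightarrow> bool" where
  "simple_graph V adj \<longleftrightarrow> finite V \<and>
     (\<forall>u v. adj u v \<longrightarrow> u \<in> V \<and> v \<in> V \<and> u \<noteq> v \<and> adj v u)"

definition total_dominating :: "'a set \<Rightarrow> ('a \<Rightarrow> 'a \<Rightarrow> bool) \<Rightarrow> 'a set \<Rightarrow> bool" where
  "total_dominating V adj D \<longleftrightarrow> D \<subseteq> V \<and> (\<forall>v\<in>V. \<exists>u\<in>D. adj v u)"

definition d_t :: "'a set \<Rightarrow> ('a \<Rightarrow> 'a \<Rightarrow> bool) \<Rightarrow> nat \<Rightarrow> nat" where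
  "d_t V adj i = card {D. total_dominating V adj D \<and> card D = i}"

definition total_dom_poly :: "'a set \<Rightarrow> ('a \<Rightarrow> 'a \<Rightarrow> bool) \<Rightarrow> nat poly" where
  "total_dom_poly V adj = (\<Sum>i\<le>card V. monom (d_t V adj i) i)"

definition unimodal :: "'b::{zero,linorder} poly \<Rightarrow> bool" where
  "unimodal p \<longleftrightarrow> (\<exists>k\<le>degree p.
      (\<forall>i<k. coeff p i \<le> coeff p (Suc i)) \<and>
      (\<forall>i. k \<le> i \<and> i < degree p \<longrightarrow> coeff p (Suc i) \<le> coeff p i))"

datatype helm_vertex = Hub | Rim nat | Pend nat nat

text \<open>Rim i (i < n) are the cycle vertices, Pend i j (j < m) the pendant
vertices attached at Rim i.\<close>

definition gen_helm_V :: "nat \<Rightarrow> nat \<Rightarrow> helm_vertex set" where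
  "gen_helm_V n m = {Hub} \<union> Rim ` {..<n} \<union> {Pend i j | i j. i < n \<and> j < m}"

fun gen_helm_adj :: "nat \<Rightarrow> nat \<Rightarrow> helm_vertex \<Rightarrow> helm_vertex \<Rightarrow> bool" where
  "gen_helm_adj n m Hub (Rim i) = (i < n)"
| "gen_helm_adj n m (Rim i) Hub = (i < n)"
| "gen_helm_adj n m (Rim i) (Rim j) = (i < n \<and> j < n \<and> (j = Suc i mod n \<or> i = Suc j mod n))"
| "gen_helm_adj n m (Rim i) (Pend i' j) = (i = i' \<and> i < n \<and> j < m)"
| "gen_helm_adj n m (Pend i' j) (Rim i) = (i = i' \<and> i < n \<and> j < m)"
| "gen_helm_adj n m _ _ = False"

definition helm_V :: "nat \<Rightarrow> helm_vertex set" where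
  "helm_V n = {Hub} \<union> Rim ` {..<n} \<union> {Pend i 0 | i. i < n}"

fun helm_adj :: "nat \<Rightarrow> helm_vertex \<Rightarrow> helm_vertex \<Rightarrow> bool" where
  "helm_adj n Hub (Rim i) = (i < n)"
| "helm_adj n (Rim i) Hub = (i < n)"
| "helm_adj n (Rim i) (Rim j) = (i < n \<and> j < n \<and> (j = Suc i mod n \<or> i = Suc j mod n))"
| "helm_adj n (Rim i) (Pend i' j) = (i = i' \<and> i < n \<and> j = 0)"
| "helm_adj n (Pend i' j) (Rim i) = (i = i' \<and> i < n \<and> j = 0)"
| "helm_adj n _ _ = False"

text \<open>Vertex (v,0) is v itself; (v,1),(v,2) are the other two path vertices,
with path v - (v,1) - (v,2).\<close>

definition P3_V :: "'a set \<Rightarrow> ('a \<times> nat) set" where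
  "P3_V V = V \<times> {0, 1, 2}"

definition P3_adj :: "'a set \<Rightarrow> ('a \<Rightarrow> 'a \<Rightarrow> bool) \<Rightarrow> 'a \<times> nat \<Rightarrow> 'a \<times> nat \<Rightarrow> bool" where
  "P3_adj V adj x y \<longleftrightarrow>
     (snd x = 0 \<and> snd y = 0 \<and> adj (fst x) (fst y)) \<or>
     (fst x = fst y \<and> fst x \<in> V \<and>
        ((snd x = 0 \<and> snd y = 1) \<or> (snd x = 1 \<and> snd y = 0) \<or>
         (snd x = 1 \<and> snd y = 2) \<or> (snd x = 2 \<and> snd y = 1)))"

text \<open>Inl v is the original vertex v; Inr (v,j), j < k v, are the pendants at v.\<close>

definition sunlike_V :: "'a set \<Rightarrow> ('a \<Rightarrow> nat) \<Rightarrow> ('a + 'a \<times> nat) set" where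
  "sunlike_V V k = Inl ` V \<union> Inr ` {(v, j) | v j. v \<in> V \<and> j < k v}"

fun sunlike_adj :: "'a set \<Rightarrow> ('a \<Rightarrow> 'a \<Rightarrow> bool) \<Rightarrow> ('a \<Rightarrow> nat) \<Rightarrow>
    'a + 'a \<times> nat \<Rightarrow> 'a + 'a \<times> nat \<Rightarrow> bool" where
  "sunlike_adj V adj k (Inl u) (Inl v) = adj u v"
| "sunlike_adj V adj k (Inl u) (Inr (v, j)) = (u = v \<and> v \<in> V \<and> j < k v)"
| "sunlike_adj V adj k (Inr (v, j)) (Inl u) = (u = v \<and> v \<in> V \<and> j < k v)"
| "sunlike_adj V adj k (Inr _) (Inr _) = False"

end

theory Submission
  imports Defs
begin

(* In each of these graphs the vertices split into blocks such that a set is totally dominating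
   exactly when its trace on every block lies in a prescribed family. For the helms there is a
   single condition: the set must contain the rim, whose vertices are the only neighbours of the
   pendant vertices. For H(3) a block is a vertex with its attached path, and the set must contain
   the middle vertex of the path and one of its ends; for a sunlike graph a block is a vertex v with
   its pendants, and the set must contain v and, when v is isolated in G, also a pendant of v.
   The total domination polynomial is then the product of the cardinality polynomials of the block
   families, each of the form x^a (1 + x)^b, possibly with its lowest coefficient deleted. These
   coefficient sequences are Polya frequency sequences of order 2, a class closed under convolution
   by the Cauchy-Binet formula, and such sequences are unimodal. *)

(* Polya frequency sequences of order 2: the Toeplitz matrix (f (j - i)) has nonnegative 2 x 2
   minors. Asking for all i \<le> j rather than only i = j adds to log-concavity the absence of
   internal zeros. *)
definition pf2 :: "(nat \<Rightarrow> real) \<Rightarrow> bool" where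
  "pf2 f \<longleftrightarrow> (\<forall>i. 0 \<le> f i) \<and> (\<forall>i j. i \<le> j \<longrightarrow> f i * f (j + 2) \<le> f (i + 1) * f (j + 1))"

lemma pf2_nonneg: "pf2 f \<Longrightarrow> 0 \<le> f i"
  unfolding pf2_def by auto

lemma pf2_shift:
  assumes "pf2 f" "u + d + d \<le> v"
  shows "f u * f v \<le> f (u + d) * f (v - d)"
  using assms(2)
proof (induction d)
  case 0
  then show ?case by simp
next
  case (Suc d)
  have "f u * f v \<le> f (u + d) * f (v - d)"
    using Suc by simp
  also have "\<dots> \<le> f (u + d + 1) * f (v - d - 1)"
  proof -
    have "f (u + d) * f ((v - d - 2) + 2) \<le> f (u + d + 1) * f ((v - d - 2) + 1)"
      using assms(1) Suc.prems unfolding pf2_def by auto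
    moreover have "(v - d - 2) + 2 = v - d" "(v - d - 2) + 1 = v - d - 1"
      using Suc.prems by auto
    ultimately show ?thesis by simp
  qed
  finally show ?case by simp
qed

lemma pf2_exchange:
  assumes "pf2 f" "x < p" "x < q" "p + q = x + y"
  shows "f x * f y \<le> f p * f q"
proof -
  have shift: "f x * f y \<le> f a * f b" if "x < a" "a \<le> b" "a + b = x + y" for a b
  proof -
    have "f x * f y \<le> f (x + (a - x)) * f (y - (a - x))"
      using that by (intro pf2_shift[OF assms(1)]) auto
    moreover have "x + (a - x) = a" "y - (a - x) = b"
      using that by auto
    ultimately show ?thesis by simp
  qed
  show ?thesis
    using shift[of p q] shift[of q p] assms(2-4) by (cases "p \<le> q") (auto simp: mult.commute)
qed

lemma pf2_increasing_below_max:
  assumes "pf2 f" "k \<le> n" "\<forall>j\<le>n. f j \<le> f k" "i < k"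
  shows "f i \<le> f (Suc i)"
proof (rule ccontr)
  assume "\<not> f i \<le> f (Suc i)"
  then have drop: "f (Suc i) < f i" by simp
  have "f i \<le> f k"
    using assms(2-4) by simp
  show False
  proof (cases "Suc i = k")
    case True
    then show False using drop \<open>f i \<le> f k\<close> by simp
  next
    case False
    have pos: "0 < f k"
      using drop \<open>f i \<le> f k\<close> pf2_nonneg[OF assms(1), of "Suc i"] by linarith
    have "f i * f k \<le> f (Suc i) * f (k - 1)"
      using False assms(4) by (intro pf2_exchange[OF assms(1)]) auto
    also have "\<dots> \<le> f (Suc i) * f k"
      using assms(2-4) pf2_nonneg[OF assms(1)] by (intro mult_left_mono) auto
    also have "\<dots> < f i * f k"
      using drop pos by simp
    finally show False by simp
  qed
qed

lemma pf2_decreasing_above_max: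
  assumes "pf2 f" "\<forall>j\<le>n. f j \<le> f k" "k \<le> i" "i < n"
  shows "f (Suc i) \<le> f i"
proof (rule ccontr)
  assume "\<not> f (Suc i) \<le> f i"
  then have rise: "f i < f (Suc i)" by simp
  have "f (Suc i) \<le> f k"
    using assms(2,4) by simp
  show False
  proof (cases "i = k")
    case True
    then show False using rise \<open>f (Suc i) \<le> f k\<close> by simp
  next
    case False
    have pos: "0 < f k"
      using rise \<open>f (Suc i) \<le> f k\<close> pf2_nonneg[OF assms(1), of i] by linarith
    have "f k * f (Suc i) \<le> f (Suc k) * f i"
      using False assms(3) by (intro pf2_exchange[OF assms(1)]) auto
    also have "\<dots> \<le> f k * f i"
      using assms(2-4) pf2_nonneg[OF assms(1)] by (intro mult_right_mono) auto
    also have "\<dots> < f k * f (Suc i)"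
      using rise pos by simp
    finally show False by simp
  qed
qed

lemma unimodal_if_pf2_coeff:
  fixes p :: "nat poly"
  assumes "pf2 (\<lambda>i. real (coeff p i))"
  shows "unimodal p"
proof -
  define f where "f i = real (coeff p i)" for i
  obtain k where k: "k \<le> degree p" "\<forall>j\<le>degree p. f j \<le> f k"
    using arg_min_if_finite[of "{..degree p}" "\<lambda>j. - f j"] by (auto simp: not_less)
  show ?thesis
    unfolding unimodal_def
  proof (intro exI[of _ k] conjI allI impI)
    show "coeff p i \<le> coeff p (Suc i)" if "i < k" for i
      using pf2_increasing_below_max[OF assms k(1) _ that] k(2) by (simp add: f_def)
    show "coeff p (Suc i) \<le> coeff p i" if "k \<le> i \<and> i < degree p" for i
      using pf2_decreasing_above_max[OF assms _ _ _, of "degree p" k i] k(2) that by (simp add: f_def)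
  qed (rule k(1))
qed

lemma binet_cauchy_2x2:
  fixes a b c d :: "nat \<Rightarrow> real"
  shows "(\<Sum>t<N. a t * b t) * (\<Sum>t<N. c t * d t) - (\<Sum>t<N. a t * d t) * (\<Sum>t<N. c t * b t)
       = (\<Sum>t<N. \<Sum>u\<in>{Suc t..<N}. (a t * c u - a u * c t) * (b t * d u - b u * d t))"
proof (induction N)
  case 0
  then show ?case by simp
next
  case (Suc N)
  have split: "(\<Sum>t<Suc N. \<Sum>u\<in>{Suc t..<Suc N}. (a t * c u - a u * c t) * (b t * d u - b u * d t))
     = (\<Sum>t<N. \<Sum>u\<in>{Suc t..<N}. (a t * c u - a u * c t) * (b t * d u - b u * d t))
       + (\<Sum>t<N. (a t * c N - a N * c t) * (b t * d N - b N * d t))"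
    by (simp add: sum.distrib)
  have new_column: "(\<Sum>t<N. (a t * c N - a N * c t) * (b t * d N - b N * d t))
     = c N * d N * (\<Sum>t<N. a t * b t) - c N * b N * (\<Sum>t<N. a t * d t)
       - a N * d N * (\<Sum>t<N. c t * b t) + a N * b N * (\<Sum>t<N. c t * d t)"
    by (simp add: sum_distrib_left sum_subtractf sum.distrib algebra_simps)
  show ?case
    using Suc.IH unfolding split new_column by (simp add: algebra_simps)
qed

lemma binet_cauchy_2x2_nonneg:
  fixes a b c d :: "nat \<Rightarrow> real"
  assumes "\<And>t u. t < u \<Longrightarrow> u < N \<Longrightarrow> 0 \<le> a t * c u - a u * c t"
    and "\<And>t u. t < u \<Longrightarrow> u < N \<Longrightarrow> 0 \<le> b t * d u - b u * d t"
  shows "(\<Sum>t<N. a t * d t) * (\<Sum>t<N. c t * b t) \<le> (\<Sum>t<N. a t * b t) * (\<Sum>t<N. c t * d t)"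
proof -
  have "0 \<le> (\<Sum>t<N. \<Sum>u\<in>{Suc t..<N}. (a t * c u - a u * c t) * (b t * d u - b u * d t))"
    using assms by (intro sum_nonneg mult_nonneg_nonneg) auto
  then show ?thesis
    unfolding binet_cauchy_2x2[symmetric] by simp
qed

lemma sum_atMost_truncated:
  fixes h g :: "nat \<Rightarrow> real"
  assumes "m \<le> N"
  shows "(\<Sum>t\<le>N. h t * (if t \<le> m then g (m - t) else 0)) = (\<Sum>t\<le>m. h t * g (m - t))"
proof -
  have "(\<Sum>t\<le>N. h t * (if t \<le> m then g (m - t) else 0))
      = (\<Sum>t\<le>m. h t * (if t \<le> m then g (m - t) else 0))"
    using assms by (intro sum.mono_neutral_right) auto
  then show ?thesis by simp
qed

lemma pf2_minor_shift_right:
  assumes "pf2 f" "t < u"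
  shows "f u * (if t = 0 then 0 else f (t - 1)) \<le> f t * (if u = 0 then 0 else f (u - 1))"
proof (cases "t = 0")
  case True
  then show ?thesis
    using pf2_nonneg[OF assms(1)] assms(2) by simp
next
  case False
  have "f (t - 1) * f u \<le> f t * f (u - 1)"
    using assms(2) False by (intro pf2_exchange[OF assms(1)]) auto
  then show ?thesis
    using assms(2) False by (simp add: mult.commute)
qed

lemma pf2_minor_reflected:
  assumes "pf2 g" "t < u" "a < b"
  shows "(if u \<le> a then g (a - u) else 0) * (if t \<le> b then g (b - t) else 0)
    \<le> (if t \<le> a then g (a - t) else 0) * (if u \<le> b then g (b - u) else 0)"
proof (cases "u \<le> a")
  case False
  then show ?thesis
    using pf2_nonneg[OF assms(1)] by simp
next
  case True
  have "g (a - u) * g (b - t) \<le> g (a - t) * g (b - u)"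
    using assms(2,3) True by (intro pf2_exchange[OF assms(1)]) auto
  then show ?thesis
    using assms(2,3) True by simp
qed

(* The four sums are entries of the product of the 2 x N matrix with rows f and f shifted by one
   and the N x 2 matrix with columns g reflected at i + 1 and at j + 2. *)
lemma pf2_convolution:
  assumes f: "pf2 f" and g: "pf2 g"
  shows "pf2 (\<lambda>n. \<Sum>k\<le>n. f k * g (n - k))" (is "pf2 ?h")
proof -
  have "?h i * ?h (j + 2) \<le> ?h (i + 1) * ?h (j + 1)" if ij: "i \<le> j" for i j
  proof -
    define N where "N = j + 3"
    define f' where "f' t = (if t = 0 then 0 else f (t - 1))" for t
    define g1 where "g1 t = (if t \<le> i + 1 then g (i + 1 - t) else 0)" for t
    define g2 where "g2 t = (if t \<le> j + 2 then g (j + 2 - t) else 0)" for t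
    have range: "{..<N} = {..Suc (j + 1)}"
      unfolding N_def by auto
    have "(\<Sum>t<N. f t * g1 t) = ?h (i + 1)"
      unfolding range g1_def using ij by (intro sum_atMost_truncated) auto
    moreover have "(\<Sum>t<N. f t * g2 t) = ?h (j + 2)"
      unfolding range g2_def by (intro sum_atMost_truncated) auto
    moreover have "(\<Sum>t<N. f' t * g2 t) = ?h (j + 1)"
      unfolding range sum.atMost_Suc_shift by (simp add: f'_def g2_def)
    moreover have "(\<Sum>t<N. f' t * g1 t) = ?h i"
    proof -
      have "(\<Sum>t<N. f' t * g1 t) = (\<Sum>t\<le>j + 1. f t * (if t \<le> i then g (i - t) else 0))"
        unfolding range sum.atMost_Suc_shift by (simp add: f'_def g1_def cong: if_cong)
      also have "\<dots> = ?h i"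
        using ij by (intro sum_atMost_truncated) auto
      finally show ?thesis .
    qed
    moreover have "(\<Sum>t<N. f t * g2 t) * (\<Sum>t<N. f' t * g1 t)
        \<le> (\<Sum>t<N. f t * g1 t) * (\<Sum>t<N. f' t * g2 t)"
    proof (rule binet_cauchy_2x2_nonneg)
      fix t u assume tu: "t < u" "u < N"
      show "0 \<le> f t * f' u - f u * f' t"
        using pf2_minor_shift_right[OF f tu(1)] unfolding f'_def by simp
      have "u \<le> j + 2" "t \<le> j + 2"
        using tu unfolding N_def by auto
      then show "0 \<le> g1 t * g2 u - g1 u * g2 t"
        using pf2_minor_reflected[OF g tu(1), of "i + 1" "j + 2"] ij unfolding g1_def g2_def by simp
    qed
    ultimately show ?thesis
      by (simp add: mult.commute)
  qed
  moreover have "0 \<le> ?h n" for n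
    using pf2_nonneg[OF f] pf2_nonneg[OF g] by (intro sum_nonneg mult_nonneg_nonneg)
  ultimately show ?thesis
    unfolding pf2_def by blast
qed

lemma pf2_coeff_mult:
  fixes p q :: "real poly"
  assumes "pf2 (coeff p)" "pf2 (coeff q)"
  shows "pf2 (coeff (p * q))"
  using pf2_convolution[OF assms] by (simp add: coeff_mult[abs_def])

lemma pf2_coeff_prod:
  fixes p :: "'i \<Rightarrow> real poly"
  assumes "finite I" "\<And>i. i \<in> I \<Longrightarrow> pf2 (coeff (p i))"
  shows "pf2 (coeff (\<Prod>i\<in>I. p i))"
  using assms
proof (induction I rule: finite_induct)
  case empty
  then show ?case by (auto simp: pf2_def)
next
  case (insert i I)
  then show ?case by (simp add: pf2_coeff_mult)
qed

lemma pf2_if_vanishes_from_2: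
  assumes "\<And>i. 0 \<le> f i" "\<And>i. 2 \<le> i \<Longrightarrow> f i = 0"
  shows "pf2 f"
  using assms unfolding pf2_def by auto

lemma pf2_delete_lowest:
  assumes "pf2 f" "\<And>i. i < r \<Longrightarrow> f i = 0"
  shows "pf2 (f(r := 0))"
  unfolding pf2_def
proof (intro conjI allI impI)
  show "0 \<le> (f(r := 0)) i" for i
    using pf2_nonneg[OF assms(1)] by simp
  show "(f(r := 0)) i * (f(r := 0)) (j + 2) \<le> (f(r := 0)) (i + 1) * (f(r := 0)) (j + 1)"
    if "i \<le> j" for i j
  proof (cases "i \<le> r")
    case True
    then have "(f(r := 0)) i = 0"
      using assms(2) by auto
    then show ?thesis
      using pf2_nonneg[OF assms(1)] by simp
  next
    case False
    then show ?thesis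
      using assms(1) that unfolding pf2_def by auto
  qed
qed

definition card_gf :: "'a set set \<Rightarrow> real poly" where
  "card_gf F = (\<Sum>X\<in>F. monom 1 (card X))"

lemma coeff_card_gf:
  assumes "finite F"
  shows "coeff (card_gf F) i = real (card {X\<in>F. card X = i})"
proof -
  have "coeff (card_gf F) i = (\<Sum>X\<in>F. if card X = i then 1 else 0)"
    unfolding card_gf_def by (simp add: coeff_sum coeff_monom)
  also have "\<dots> = real (card {X\<in>F. card X = i})"
    using assms by (simp add: sum.If_cases Int_def)
  finally show ?thesis .
qed

lemma card_gf_Un_disjoint:
  assumes "finite U" "finite W" "U \<inter> W = {}" "F \<subseteq> Pow U" "G \<subseteq> Pow W"
  shows "card_gf {A \<union> B | A B. A \<in> F \<and> B \<in> G} = card_gf F * card_gf G"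
proof -
  have image: "{A \<union> B | A B. A \<in> F \<and> B \<in> G} = (\<lambda>(A, B). A \<union> B) ` (F \<times> G)"
    by auto
  have inj: "inj_on (\<lambda>(A, B). A \<union> B) (F \<times> G)"
  proof (rule inj_onI, clarify)
    fix A B A' B' assume "A \<in> F" "B \<in> G" "A' \<in> F" "B' \<in> G" "A \<union> B = A' \<union> B'"
    moreover have "A = (A \<union> B) \<inter> U" "A' = (A' \<union> B') \<inter> U"
      "B = (A \<union> B) \<inter> W" "B' = (A' \<union> B') \<inter> W"
      using calculation assms(3-5) by blast+
    ultimately show "A = A' \<and> B = B'"
      by metis
  qed
  have card_Un: "card (A \<union> B) = card A + card B" if "A \<in> F" "B \<in> G" for A B
  proof -
    have "A \<subseteq> U" "B \<subseteq> W"
      using that assms(4,5) by auto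
    then show ?thesis
      using assms(1-3) by (intro card_Un_disjoint) (auto intro: finite_subset)
  qed
  have "card_gf {A \<union> B | A B. A \<in> F \<and> B \<in> G}
      = (\<Sum>(A, B)\<in>F \<times> G. monom 1 (card A) * monom 1 (card B))"
    unfolding card_gf_def image sum.reindex[OF inj]
    by (intro sum.cong) (auto simp: card_Un mult_monom)
  also have "\<dots> = card_gf F * card_gf G"
    unfolding card_gf_def by (simp add: sum_product sum.cartesian_product)
  finally show ?thesis .
qed

lemma card_gf_blocks:
  assumes "finite I" "\<And>i. i \<in> I \<Longrightarrow> finite (U i)"
    "\<And>i j. i \<in> I \<Longrightarrow> j \<in> I \<Longrightarrow> i \<noteq> j \<Longrightarrow> U i \<inter> U j = {}"
    "\<And>i. i \<in> I \<Longrightarrow> F i \<subseteq> Pow (U i)"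
  shows "card_gf {D. D \<subseteq> (\<Union>i\<in>I. U i) \<and> (\<forall>i\<in>I. D \<inter> U i \<in> F i)} = (\<Prod>i\<in>I. card_gf (F i))"
  using assms
proof (induction I rule: finite_induct)
  case empty
  have "{D. D \<subseteq> (\<Union>i\<in>{}. U i) \<and> (\<forall>i\<in>{}. D \<inter> U i \<in> F i)} = {{}}"
    by auto
  then show ?case by (simp add: card_gf_def)
next
  case (insert a I)
  define W where "W = (\<Union>i\<in>I. U i)"
  define G where "G = {D. D \<subseteq> W \<and> (\<forall>i\<in>I. D \<inter> U i \<in> F i)}"
  have disj: "U a \<inter> U i = {}" if "i \<in> I" for i
    using insert.prems(2) insert.hyps(2) that by (metis insertCI)
  have "{D. D \<subseteq> (\<Union>i\<in>insert a I. U i) \<and> (\<forall>i\<in>insert a I. D \<inter> U i \<in> F i)}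
      = {A \<union> B | A B. A \<in> F a \<and> B \<in> G}"
  proof (intro set_eqI iffI)
    fix D assume D: "D \<in> {D. D \<subseteq> (\<Union>i\<in>insert a I. U i) \<and> (\<forall>i\<in>insert a I. D \<inter> U i \<in> F i)}"
    have "D \<inter> W \<inter> U i = D \<inter> U i" if "i \<in> I" for i
      using that unfolding W_def by blast
    then have "D \<inter> W \<in> G"
      using D unfolding G_def by auto
    moreover have "D = (D \<inter> U a) \<union> (D \<inter> W)"
      using D unfolding W_def by blast
    ultimately show "D \<in> {A \<union> B | A B. A \<in> F a \<and> B \<in> G}"
      using D by blast
  next
    fix D assume "D \<in> {A \<union> B | A B. A \<in> F a \<and> B \<in> G}"
    then obtain A B where AB: "D = A \<union> B" "A \<in> F a" "B \<in> G"
      by blast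
    have "A \<subseteq> U a"
      using AB(2) insert.prems(3) by auto
    moreover have "B \<subseteq> W" "\<forall>i\<in>I. B \<inter> U i \<in> F i"
      using AB(3) unfolding G_def by auto
    moreover have "D \<inter> U i = B \<inter> U i" if "i \<in> I" for i
      using disj[OF that] \<open>A \<subseteq> U a\<close> AB(1) by blast
    moreover have "D \<inter> U a = A"
      using disj \<open>A \<subseteq> U a\<close> \<open>B \<subseteq> W\<close> AB(1) unfolding W_def by blast
    ultimately show "D \<in> {D. D \<subseteq> (\<Union>i\<in>insert a I. U i) \<and> (\<forall>i\<in>insert a I. D \<inter> U i \<in> F i)}"
      using AB unfolding W_def by auto
  qed
  also have "card_gf \<dots> = card_gf (F a) * card_gf G"
  proof (rule card_gf_Un_disjoint)
    show "U a \<inter> W = {}"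
      using disj unfolding W_def by blast
    show "finite W" "G \<subseteq> Pow W"
      using insert.hyps(1) insert.prems(1) unfolding W_def G_def by auto
  qed (use insert.prems in auto)
  also have "card_gf G = (\<Prod>i\<in>I. card_gf (F i))"
    unfolding G_def W_def using insert.IH insert.prems by auto
  finally show ?case
    using insert.hyps by simp
qed

lemma pf2_card_gf_small:
  assumes "finite F" "\<And>X. X \<in> F \<Longrightarrow> card X \<le> 1"
  shows "pf2 (coeff (card_gf F))"
proof (rule pf2_if_vanishes_from_2)
  show "0 \<le> coeff (card_gf F) i" for i
    using coeff_card_gf[OF assms(1)] by simp
  show "coeff (card_gf F) i = 0" if "2 \<le> i" for i
  proof -
    have none: "{X\<in>F. card X = i} = {}"
      using assms(2) that by fastforce
    show ?thesis
      unfolding coeff_card_gf[OF assms(1)] none by simp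
  qed
qed

(* The cardinality polynomial of the interval is x ^ card R * (1 + x) ^ card (V - R). *)
lemma pf2_card_gf_interval:
  assumes "finite V" "R \<subseteq> V"
  shows "pf2 (coeff (card_gf {D. R \<subseteq> D \<and> D \<subseteq> V}))"
proof -
  define F where "F x = (if x \<in> R then {{x}} else {{}, {x}})" for x :: 'a
  have "{D. R \<subseteq> D \<and> D \<subseteq> V} = {D. D \<subseteq> (\<Union>x\<in>V. {x}) \<and> (\<forall>x\<in>V. D \<inter> {x} \<in> F x)}"
    unfolding F_def using assms(2) by auto
  also have "card_gf \<dots> = (\<Prod>x\<in>V. card_gf (F x))"
    using assms(1) by (intro card_gf_blocks) (auto simp: F_def)
  finally show ?thesis
    using assms(1) by (auto intro!: pf2_coeff_prod pf2_card_gf_small simp: F_def split: if_splits)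
qed

lemma pf2_card_gf_interval_minus_bottom:
  assumes "finite V" "R \<subseteq> V"
  shows "pf2 (coeff (card_gf ({D. R \<subseteq> D \<and> D \<subseteq> V} - {R})))"
proof -
  define F where "F = {D. R \<subseteq> D \<and> D \<subseteq> V}"
  have fin: "finite F" "finite (F - {R})"
    unfolding F_def using assms(1) by auto
  have fin_sets: "finite X" if "X \<in> F" for X
    using that assms(1) unfolding F_def by (auto intro: finite_subset)
  have bottom: "X = R" if "X \<in> F" "card X = card R" for X
    using that fin_sets[OF that(1)] card_subset_eq[of X R] unfolding F_def by auto
  have "{X \<in> F - {R}. card X = i} = (if i = card R then {} else {X \<in> F. card X = i})" for i
    using bottom by auto
  then have coeff_eq: "coeff (card_gf (F - {R})) = (coeff (card_gf F))(card R := 0)"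
    by (auto simp: coeff_card_gf[OF fin(1)] coeff_card_gf[OF fin(2)])
  have "coeff (card_gf F) i = 0" if "i < card R" for i
  proof -
    have "card R \<le> card X" if "X \<in> F" for X
      using that fin_sets unfolding F_def by (auto intro: card_mono)
    then have none: "{X \<in> F. card X = i} = {}"
      using \<open>i < card R\<close> by fastforce
    show ?thesis
      unfolding coeff_card_gf[OF fin(1)] none by simp
  qed
  then have "pf2 ((coeff (card_gf F))(card R := 0))"
    using pf2_card_gf_interval[OF assms] unfolding F_def by (intro pf2_delete_lowest)
  then have "pf2 (coeff (card_gf (F - {R})))"
    unfolding coeff_eq .
  then show ?thesis
    unfolding F_def .
qed

lemma coeff_total_dom_poly:
  assumes "finite V"
  shows "coeff (total_dom_poly V adj) i = d_t V adj i"
proof (cases "i \<le> card V")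
  case False
  have none: "{D. total_dominating V adj D \<and> card D = i} = {}"
    using False assms unfolding total_dominating_def by (auto dest: card_mono)
  show ?thesis
    using False by (simp add: total_dom_poly_def coeff_sum d_t_def none)
qed (simp add: total_dom_poly_def coeff_sum)

lemma unimodal_total_dom_poly_if_pf2:
  assumes "finite V" "pf2 (coeff (card_gf {D. total_dominating V adj D}))"
  shows "unimodal (total_dom_poly V adj)"
proof (rule unimodal_if_pf2_coeff)
  have "finite {D. total_dominating V adj D}"
    using assms(1) unfolding total_dominating_def by simp
  then have "coeff (card_gf {D. total_dominating V adj D}) i = real (coeff (total_dom_poly V adj) i)" for i
    by (simp add: coeff_card_gf coeff_total_dom_poly[OF assms(1)] d_t_def)
  then show "pf2 (\<lambda>i. real (coeff (total_dom_poly V adj) i))"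
    using assms(2) by (metis ext)
qed

lemma unimodal_total_dom_poly_blocks:
  assumes "finite I" "\<And>i. i \<in> I \<Longrightarrow> finite (U i)"
    "\<And>i j. i \<in> I \<Longrightarrow> j \<in> I \<Longrightarrow> i \<noteq> j \<Longrightarrow> U i \<inter> U j = {}"
    "\<And>i. i \<in> I \<Longrightarrow> F i \<subseteq> Pow (U i)"
    "\<And>i. i \<in> I \<Longrightarrow> pf2 (coeff (card_gf (F i)))"
    "V = (\<Union>i\<in>I. U i)"
    "\<And>D. total_dominating V adj D \<longleftrightarrow> D \<subseteq> V \<and> (\<forall>i\<in>I. D \<inter> U i \<in> F i)"
  shows "unimodal (total_dom_poly V adj)"
proof (rule unimodal_total_dom_poly_if_pf2)
  show "finite V"
    using assms(1,2,6) by simp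
  have "{D. total_dominating V adj D} = {D. D \<subseteq> (\<Union>i\<in>I. U i) \<and> (\<forall>i\<in>I. D \<inter> U i \<in> F i)}"
    using assms(6,7) by auto
  also have "card_gf \<dots> = (\<Prod>i\<in>I. card_gf (F i))"
    using assms(1-4) by (rule card_gf_blocks)
  finally have "card_gf {D. total_dominating V adj D} = (\<Prod>i\<in>I. card_gf (F i))" .
  then show "pf2 (coeff (card_gf {D. total_dominating V adj D}))"
    using assms(1,5) by (simp add: pf2_coeff_prod)
qed

lemma total_dominating_iff_supports:
  assumes "R \<subseteq> V" "\<And>v. v \<in> V \<Longrightarrow> \<exists>r\<in>R. adj v r"
    "\<And>r. r \<in> R \<Longrightarrow> \<exists>p\<in>V. \<forall>u. adj p u \<longrightarrow> u = r"
  shows "total_dominating V adj D \<longleftrightarrow> R \<subseteq> D \<and> D \<subseteq> V"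
proof
  assume D: "total_dominating V adj D"
  have "r \<in> D" if r: "r \<in> R" for r
  proof -
    obtain p where "p \<in> V" "\<forall>u. adj p u \<longrightarrow> u = r"
      using assms(3)[OF r] by blast
    then show ?thesis
      using D unfolding total_dominating_def by blast
  qed
  then show "R \<subseteq> D \<and> D \<subseteq> V"
    using D unfolding total_dominating_def by blast
next
  assume "R \<subseteq> D \<and> D \<subseteq> V"
  then show "total_dominating V adj D"
    using assms(2) unfolding total_dominating_def by blast
qed

lemma unimodal_total_dom_poly_supports:
  assumes "finite V" "R \<subseteq> V" "\<And>v. v \<in> V \<Longrightarrow> \<exists>r\<in>R. adj v r"
    "\<And>r. r \<in> R \<Longrightarrow> \<exists>p\<in>V. \<forall>u. adj p u \<longrightarrow> u = r"
  shows "unimodal (total_dom_poly V adj)"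
proof (rule unimodal_total_dom_poly_if_pf2[OF assms(1)])
  have "{D. total_dominating V adj D} = {D. R \<subseteq> D \<and> D \<subseteq> V}"
    using total_dominating_iff_supports[OF assms(2-4)] by blast
  then show "pf2 (coeff (card_gf {D. total_dominating V adj D}))"
    using pf2_card_gf_interval[OF assms(1,2)] by simp
qed

lemma helm_total_dom_unimodal:
  assumes "n \<ge> 3"
  shows "unimodal (total_dom_poly (helm_V n) (helm_adj n))"
proof (rule unimodal_total_dom_poly_supports[where R = "Rim ` {..<n}"])
  have "helm_V n = {Hub} \<union> Rim ` {..<n} \<union> (\<lambda>i. Pend i 0) ` {..<n}"
    unfolding helm_V_def by auto
  then show "finite (helm_V n)" by simp
  show "Rim ` {..<n} \<subseteq> helm_V n"
    unfolding helm_V_def by auto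
  show "\<exists>r\<in>Rim ` {..<n}. helm_adj n v r" if v: "v \<in> helm_V n" for v
  proof -
    consider "v = Hub" | i where "i < n" "v = Rim i" | i where "i < n" "v = Pend i 0"
      using v unfolding helm_V_def by auto
    then show ?thesis
    proof cases
      case 1
      then show ?thesis using assms by (intro bexI[of _ "Rim 0"]) auto
    next
      case (2 i)
      then show ?thesis using assms by (intro bexI[of _ "Rim (Suc i mod n)"]) auto
    next
      case (3 i)
      then show ?thesis by (intro bexI[of _ "Rim i"]) auto
    qed
  qed
  show "\<exists>p\<in>helm_V n. \<forall>u. helm_adj n p u \<longrightarrow> u = r" if r: "r \<in> Rim ` {..<n}" for r
  proof -
    obtain i where "i < n" "r = Rim i"
      using r by blast
    then show ?thesis
      unfolding helm_V_def by (intro bexI[of _ "Pend i 0"] allI) (auto elim: helm_adj.elims)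
  qed
qed

lemma gen_helm_total_dom_unimodal:
  assumes "n \<ge> 3" "m \<ge> 1"
  shows "unimodal (total_dom_poly (gen_helm_V n m) (gen_helm_adj n m))"
proof (rule unimodal_total_dom_poly_supports[where R = "Rim ` {..<n}"])
  have "gen_helm_V n m = {Hub} \<union> Rim ` {..<n} \<union> case_prod Pend ` ({..<n} \<times> {..<m})"
    unfolding gen_helm_V_def by auto
  then show "finite (gen_helm_V n m)" by simp
  show "Rim ` {..<n} \<subseteq> gen_helm_V n m"
    unfolding gen_helm_V_def by auto
  show "\<exists>r\<in>Rim ` {..<n}. gen_helm_adj n m v r" if v: "v \<in> gen_helm_V n m" for v
  proof -
    consider "v = Hub" | i where "i < n" "v = Rim i" | i j where "i < n" "j < m" "v = Pend i j"
      using v unfolding gen_helm_V_def by auto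
    then show ?thesis
    proof cases
      case 1
      then show ?thesis using assms by (intro bexI[of _ "Rim 0"]) auto
    next
      case (2 i)
      then show ?thesis using assms by (intro bexI[of _ "Rim (Suc i mod n)"]) auto
    next
      case (3 i j)
      then show ?thesis by (intro bexI[of _ "Rim i"]) auto
    qed
  qed
  show "\<exists>p\<in>gen_helm_V n m. \<forall>u. gen_helm_adj n m p u \<longrightarrow> u = r" if r: "r \<in> Rim ` {..<n}" for r
  proof -
    obtain i where "i < n" "r = Rim i"
      using r by blast
    then show ?thesis
      using assms(2) unfolding gen_helm_V_def
      by (intro bexI[of _ "Pend i 0"] allI) (auto elim: gen_helm_adj.elims)
  qed
qed

lemma total_dominating_P3_iff:
  "total_dominating (P3_V V) (P3_adj V adj) D \<longleftrightarrow>
     D \<subseteq> P3_V V \<and> (\<forall>v\<in>V. (v, 1) \<in> D \<and> ((v, 0) \<in> D \<or> (v, 2) \<in> D))"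
proof
  assume D: "total_dominating (P3_V V) (P3_adj V adj) D"
  have "(v, 1) \<in> D \<and> ((v, 0) \<in> D \<or> (v, 2) \<in> D)" if v: "v \<in> V" for v
  proof -
    have "(v, 2) \<in> P3_V V" "(v, 1) \<in> P3_V V"
      using v unfolding P3_V_def by auto
    then obtain x y where "x \<in> D" "P3_adj V adj (v, 2) x" "y \<in> D" "P3_adj V adj (v, 1) y"
      using D unfolding total_dominating_def by meson
    then show ?thesis
      unfolding P3_adj_def by (cases x, cases y) auto
  qed
  then show "D \<subseteq> P3_V V \<and> (\<forall>v\<in>V. (v, 1) \<in> D \<and> ((v, 0) \<in> D \<or> (v, 2) \<in> D))"
    using D unfolding total_dominating_def by blast
next
  assume D: "D \<subseteq> P3_V V \<and> (\<forall>v\<in>V. (v, 1) \<in> D \<and> ((v, 0) \<in> D \<or> (v, 2) \<in> D))"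
  have "\<exists>y\<in>D. P3_adj V adj (v, s) y" if "v \<in> V" "s \<in> {0, 1, 2}" for v s
  proof (cases "s = 1")
    case True
    have "(v, 0) \<in> D \<or> (v, 2) \<in> D"
      using D that(1) by blast
    moreover have "P3_adj V adj (v, 1) (v, 0)" "P3_adj V adj (v, 1) (v, 2)"
      using that(1) unfolding P3_adj_def by auto
    ultimately show ?thesis
      using True by blast
  next
    case False
    then show ?thesis
      using D that unfolding P3_adj_def by (intro bexI[of _ "(v, 1)"]) auto
  qed
  then show "total_dominating (P3_V V) (P3_adj V adj) D"
    using D unfolding total_dominating_def P3_V_def by auto
qed

lemma Int_in_pointed_interval_iff:
  "X \<inter> U \<in> {Y. {a} \<subseteq> Y \<and> Y \<subseteq> U} \<longleftrightarrow> a \<in> X \<and> a \<in> U"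
  by auto

lemma Int_in_pointed_interval_minus_bottom_iff:
  "X \<inter> U \<in> {Y. {a} \<subseteq> Y \<and> Y \<subseteq> U} - {{a}} \<longleftrightarrow> a \<in> X \<and> a \<in> U \<and> (\<exists>b\<in>U - {a}. b \<in> X)"
  by blast

lemma P3_total_dom_unimodal:
  fixes V :: "'a set"
  assumes "simple_graph V adj"
  shows "unimodal (total_dom_poly (P3_V V) (P3_adj V adj))"
proof -
  define U where "U v = {v} \<times> {0, 1, 2 :: nat}" for v :: 'a
  define F where "F v = {X. {(v, 1)} \<subseteq> X \<and> X \<subseteq> U v} - {{(v, 1)}}" for v
  have block: "D \<inter> U v \<in> F v \<longleftrightarrow> (v, 1) \<in> D \<and> ((v, 0) \<in> D \<or> (v, 2) \<in> D)" for D v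
    unfolding F_def Int_in_pointed_interval_minus_bottom_iff by (auto simp: U_def)
  show ?thesis
  proof (rule unimodal_total_dom_poly_blocks[where U = U and F = F])
    show "finite V"
      using assms unfolding simple_graph_def by simp
    show "P3_V V = (\<Union>v\<in>V. U v)"
      unfolding P3_V_def U_def by auto
    show "total_dominating (P3_V V) (P3_adj V adj) D \<longleftrightarrow>
        D \<subseteq> P3_V V \<and> (\<forall>v\<in>V. D \<inter> U v \<in> F v)" for D
      unfolding total_dominating_P3_iff block ..
    show "pf2 (coeff (card_gf (F v)))" for v
      unfolding F_def U_def by (intro pf2_card_gf_interval_minus_bottom) auto
  qed (auto simp: U_def F_def)
qed

lemma total_dominating_sunlike_iff:
  assumes "simple_graph V adj" "\<And>v. v \<in> V \<Longrightarrow> 1 \<le> k v"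
  shows "total_dominating (sunlike_V V k) (sunlike_adj V adj k) D \<longleftrightarrow>
     D \<subseteq> sunlike_V V k \<and> (\<forall>v\<in>V. Inl v \<in> D \<and> ((\<exists>u. adj v u) \<or> (\<exists>j<k v. Inr (v, j) \<in> D)))"
proof
  assume D: "total_dominating (sunlike_V V k) (sunlike_adj V adj k) D"
  have "Inl v \<in> D \<and> ((\<exists>u. adj v u) \<or> (\<exists>j<k v. Inr (v, j) \<in> D))" if v: "v \<in> V" for v
  proof -
    have "Inr (v, 0) \<in> sunlike_V V k" "Inl v \<in> sunlike_V V k"
      using v assms(2)[OF v] unfolding sunlike_V_def by auto
    then obtain x y where "x \<in> D" "sunlike_adj V adj k (Inr (v, 0)) x"
      "y \<in> D" "sunlike_adj V adj k (Inl v) y"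
      using D unfolding total_dominating_def by meson
    then show ?thesis
      by (cases x; cases y) auto
  qed
  then show "D \<subseteq> sunlike_V V k \<and> (\<forall>v\<in>V. Inl v \<in> D \<and> ((\<exists>u. adj v u) \<or> (\<exists>j<k v. Inr (v, j) \<in> D)))"
    using D unfolding total_dominating_def by blast
next
  assume D: "D \<subseteq> sunlike_V V k \<and> (\<forall>v\<in>V. Inl v \<in> D \<and> ((\<exists>u. adj v u) \<or> (\<exists>j<k v. Inr (v, j) \<in> D)))"
  have "\<exists>y\<in>D. sunlike_adj V adj k (Inl v) y" if v: "v \<in> V" for v
  proof (cases "\<exists>u. adj v u")
    case True
    then obtain u where "adj v u"
      by blast
    moreover from this have "u \<in> V"
      using assms(1) unfolding simple_graph_def by blast
    ultimately show ?thesis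
      using D by (intro bexI[of _ "Inl u"]) auto
  next
    case False
    then show ?thesis
      using D v by fastforce
  qed
  moreover have "\<exists>y\<in>D. sunlike_adj V adj k (Inr (v, j)) y" if "v \<in> V" "j < k v" for v j
    using D that by (intro bexI[of _ "Inl v"]) auto
  ultimately show "total_dominating (sunlike_V V k) (sunlike_adj V adj k) D"
    using D unfolding total_dominating_def sunlike_V_def by blast
qed

lemma sunlike_total_dom_unimodal:
  fixes V :: "'a set"
  assumes "simple_graph V adj" "\<And>v. v \<in> V \<Longrightarrow> 1 \<le> k v"
  shows "unimodal (total_dom_poly (sunlike_V V k) (sunlike_adj V adj k))"
proof -
  define U where "U v = insert (Inl v) (Inr ` ({v} \<times> {..<k v}))" for v :: 'a
  define F where "F v = (if \<exists>u. adj v u then {X. {Inl v} \<subseteq> X \<and> X \<subseteq> U v}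
    else {X. {Inl v} \<subseteq> X \<and> X \<subseteq> U v} - {{Inl v}})" for v
  have block: "D \<inter> U v \<in> F v \<longleftrightarrow> Inl v \<in> D \<and> ((\<exists>u. adj v u) \<or> (\<exists>j<k v. Inr (v, j) \<in> D))" for D v
    unfolding F_def Int_in_pointed_interval_iff Int_in_pointed_interval_minus_bottom_iff
    by (auto simp: U_def)
  show ?thesis
  proof (rule unimodal_total_dom_poly_blocks[where U = U and F = F])
    show "finite V"
      using assms unfolding simple_graph_def by simp
    show "sunlike_V V k = (\<Union>v\<in>V. U v)"
      unfolding sunlike_V_def U_def by auto
    show "total_dominating (sunlike_V V k) (sunlike_adj V adj k) D \<longleftrightarrow>
        D \<subseteq> sunlike_V V k \<and> (\<forall>v\<in>V. D \<inter> U v \<in> F v)" for D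
      using total_dominating_sunlike_iff[OF assms, where D = D] by (simp only: block)
    show "pf2 (coeff (card_gf (F v)))" for v
    proof -
      have Uv: "finite (U v)" "{Inl v} \<subseteq> U v"
        unfolding U_def by auto
      show ?thesis
        unfolding F_def
        using pf2_card_gf_interval[OF Uv] pf2_card_gf_interval_minus_bottom[OF Uv]
        by (cases "\<exists>u. adj v u") simp_all
    qed
  qed (auto simp: U_def F_def)
qed

theorem mainTheorem11:
  shows "(\<forall>n\<ge>3. unimodal (total_dom_poly (helm_V n) (helm_adj n)))
    \<and> (\<forall>n m. n \<ge> 3 \<and> m \<ge> 1 \<longrightarrow> unimodal (total_dom_poly (gen_helm_V n m) (gen_helm_adj n m)))
    \<and> (\<forall>(V :: 'a set) adj. simple_graph V adj \<longrightarrow>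
         unimodal (total_dom_poly (P3_V V) (P3_adj V adj)))
    \<and> (\<forall>(V :: 'b set) adj k. simple_graph V adj \<and> (\<forall>v\<in>V. k v \<ge> 1) \<longrightarrow>
         unimodal (total_dom_poly (sunlike_V V k) (sunlike_adj V adj k)))"
  using helm_total_dom_unimodal gen_helm_total_dom_unimodal P3_total_dom_unimodal
    sunlike_total_dom_unimodal by blast

end
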